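(* Let $R$ be a commutative Noetherian ring and $M$ an Artinian $R$-module. Then $\operatorname{Supp}_RM\subseteq\operatorname{Cos}_RM$. In particular, $\operatorname{Cos}_RM\cap V(J(M))=\operatorname{Supp}_RM$.
   Context: $\operatorname{Cos}_RM=\{\mathfrak{p}\in\operatorname{Spec}R:\operatorname{Hom}_R(R_{\mathfrak{p}},M)\neq0\}$. For Artinian $M$, $\operatorname{Supp}_RM$ is a finite set of maximal ideals and $J(M)=\bigcap_{\mathfrak{m}\in\operatorname{Supp}_RM}\mathfrak{m}$. *)

theory Defs
  imports "HOL-Algebra.Algebra"
begin

definition ring_module :: "'a ring \<Rightarrow> ('a, 'a) module" where
  "ring_module R = \<lparr> partial_object.carrier = carrier R, monoid.mult = monoid.mult R, monoid.one = \<one>\<^bsub>R\<^esub>,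
      ring.zero = \<zero>\<^bsub>R\<^esub>, ring.add = ring.add R, module.smult = monoid.mult R \<rparr>"

definition loc_rel :: "'a ring \<Rightarrow> ('a, 'b) module \<Rightarrow> 'a set \<Rightarrow> (('b \<times> 'a) \<times> ('b \<times> 'a)) set" where
  "loc_rel R M S = {((x, s), (y, t)). x \<in> carrier M \<and> y \<in> carrier M \<and> s \<in> S \<and> t \<in> S \<and>
      (\<exists>u\<in>S. u \<odot>\<^bsub>M\<^esub> ((t \<odot>\<^bsub>M\<^esub> x) \<ominus>\<^bsub>M\<^esub> (s \<odot>\<^bsub>M\<^esub> y)) = \<zero>\<^bsub>M\<^esub>)}"

text \<open>The localization S^-1 M as an R-module: elements are equivalence classes of
  fractions x/s; x/s + y/t = (t x + s y)/(s t), a (x/s) = (a x)/s, 0 = 0/1.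
  (The ring-multiplication fields of the record are irrelevant for a module.)\<close>
definition localization :: "'a ring \<Rightarrow> ('a, 'b) module \<Rightarrow> 'a set \<Rightarrow> ('a, ('b \<times> 'a) set) module" where
  "localization R M S = \<lparr> partial_object.carrier = (carrier M \<times> S) // loc_rel R M S,
      monoid.mult = (\<lambda>_ _. undefined), monoid.one = undefined,
      ring.zero = loc_rel R M S `` {(\<zero>\<^bsub>M\<^esub>, \<one>\<^bsub>R\<^esub>)},
      ring.add = (\<lambda>XX YY. \<Union>(x, s)\<in>XX. \<Union>(y, t)\<in>YY.
               loc_rel R M S `` {((t \<odot>\<^bsub>M\<^esub> x) \<oplus>\<^bsub>M\<^esub> (s \<odot>\<^bsub>M\<^esub> y), s \<otimes>\<^bsub>R\<^esub> t)}),
      module.smult = (\<lambda>a XX. \<Union>(x, s)\<in>XX. loc_rel R M S `` {(a \<odot>\<^bsub>M\<^esub> x, s)}) \<rparr>"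

definition mod_hom :: "'a ring \<Rightarrow> ('a, 'b) module \<Rightarrow> ('a, 'c) module \<Rightarrow> ('b \<Rightarrow> 'c) set" where
  "mod_hom R M N = {f. f \<in> carrier M \<rightarrow> carrier N \<and>
      (\<forall>x\<in>carrier M. \<forall>y\<in>carrier M. f (x \<oplus>\<^bsub>M\<^esub> y) = f x \<oplus>\<^bsub>N\<^esub> f y) \<and>
      (\<forall>a\<in>carrier R. \<forall>x\<in>carrier M. f (a \<odot>\<^bsub>M\<^esub> x) = a \<odot>\<^bsub>N\<^esub> f x)}"

definition Spec :: "'a ring \<Rightarrow> 'a set set" where
  "Spec R = {p. primeideal p R}"

definition Supp :: "'a ring \<Rightarrow> ('a, 'b) module \<Rightarrow> 'a set set" where
  "Supp R M = {p \<in> Spec R.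
     carrier (localization R M (carrier R - p)) \<noteq> {\<zero>\<^bsub>localization R M (carrier R - p)\<^esub>}}"

definition Cos :: "'a ring \<Rightarrow> ('a, 'b) module \<Rightarrow> 'a set set" where
  "Cos R M = {p \<in> Spec R.
     (\<exists>f \<in> mod_hom R (localization R (ring_module R) (carrier R - p)) M.
        \<exists>Z \<in> carrier (localization R (ring_module R) (carrier R - p)). f Z \<noteq> \<zero>\<^bsub>M\<^esub>)}"

definition V :: "'a ring \<Rightarrow> 'a set \<Rightarrow> 'a set set" where
  "V R I = {p \<in> Spec R. I \<subseteq> p}"

text \<open>J(M) = intersection of the (maximal) ideals in Supp M; empty intersection = R.\<close>
definition J :: "'a ring \<Rightarrow> ('a, 'b) module \<Rightarrow> 'a set" where
  "J R M = carrier R \<inter> \<Inter> (Supp R M)"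

definition artinian_module :: "'a ring \<Rightarrow> ('a, 'b) module \<Rightarrow> bool" where
  "artinian_module R M \<longleftrightarrow> module R M \<and>
     (\<forall>N :: nat \<Rightarrow> 'b set. (\<forall>k. submodule (N k) R M) \<and> (\<forall>k. N (Suc k) \<subseteq> N k)
        \<longrightarrow> (\<exists>n. \<forall>k\<ge>n. N k = N n))"

end

theory Submission imports Defs begin

text \<open>Let \<open>p \<in> Supp M\<close> and let \<open>x \<in> M\<close> have nonzero image in \<open>M\<^sub>p\<close>. Choose \<open>y = s x\<close>
  (\<open>s \<notin> p\<close>) with \<open>R y\<close> minimal among the cyclic modules \<open>R s x\<close>. Minimality makes every
  \<open>t \<notin> p\<close> act bijectively on \<open>R y\<close>, so \<open>a/s \<mapsto> s\<inverse> a y\<close> is a nonzero map \<open>R\<^sub>p \<rightarrow> M\<close> and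
  \<open>p \<in> Cos M\<close>. The same element shows that \<open>p\<close> is maximal and, by the descending chain
  \<open>R a\<^sup>n y\<close>, that every \<open>a \<in> p\<close> acts nilpotently on \<open>y\<close>. Hence for distinct \<open>p\<^sub>0, p\<^sub>1, \<dots>\<close>
  in the support the elements vanishing at \<open>p\<^sub>0, \<dots>, p\<^sub>j\<close> would form a strictly descending
  chain, so \<open>Supp M\<close> is a finite set of maximal ideals, and a prime containing their
  intersection \<open>J(M)\<close> contains, hence equals, one of them.\<close>

lemma (in primeideal) one_notin: "\<one> \<in> carrier R - I"
  using I_notcarr one_imp_carrier by blast

lemma (in primeideal) mult_notin:
  "a \<in> carrier R - I \<Longrightarrow> b \<in> carrier R - I \<Longrightarrow> a \<otimes> b \<in> carrier R - I"
  using I_prime by auto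

lemma (in primeideal) pow_notin: "a \<in> carrier R - I \<Longrightarrow> a [^] (n::nat) \<in> carrier R - I"
proof (induction n)
  case 0
  show ?case using one_notin by simp
next
  case (Suc n)
  then show ?case using mult_notin[of "a [^] n" a] by simp
qed

lemma maximalideal_subset_primeideal:
  assumes "maximalideal m R" "primeideal q R" "m \<subseteq> q"
  shows "q = m"
  using maximalideal.I_maximal[OF assms(1) primeideal.axioms(1)[OF assms(2)] assms(3)]
    ideal.Icarr[OF primeideal.axioms(1)[OF assms(2)]] primeideal.I_notcarr[OF assms(2)]
  by blast

lemma (in cring) Inter_subset_primeideal:
  assumes "finite F" "\<And>I. I \<in> F \<Longrightarrow> ideal I R" "primeideal q R"
    and "carrier R \<inter> \<Inter>F \<subseteq> q"
  shows "\<exists>I\<in>F. I \<subseteq> q"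
  using assms
proof (induction F rule: finite_induct)
  case empty
  then show ?case using primeideal.one_notin[OF empty.prems(2)] by auto
next
  case (insert I F)
  have I: "ideal I R" and F: "\<And>I'. I' \<in> F \<Longrightarrow> ideal I' R" using insert.prems(1) by auto
  show ?case
  proof (rule ccontr)
    assume none: "\<not> (\<exists>I'\<in>insert I F. I' \<subseteq> q)"
    then obtain b where b: "b \<in> I" "b \<notin> q" by auto
    have "\<not> carrier R \<inter> \<Inter>F \<subseteq> q"
      using insert.IH[OF F insert.prems(2)] none by auto
    then obtain a where a: "a \<in> carrier R" "a \<in> \<Inter>F" "a \<notin> q" by auto
    have bc: "b \<in> carrier R" using ideal.Icarr[OF I b(1)] .
    have "a \<otimes> b \<notin> q"
      using primeideal.I_prime[OF insert.prems(2) a(1) bc] a(3) b(2) by auto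
    moreover have "a \<otimes> b \<in> I" using ideal.I_l_closed[OF I b(1) a(1)] .
    moreover have "a \<otimes> b \<in> I'" if "I' \<in> F" for I'
      using ideal.I_r_closed[OF F[OF that] _ bc] a(2) that by blast
    ultimately show False using insert.prems(3) a(1) bc by blast
  qed
qed

lemma artinian_moduleD:
  assumes "artinian_module R M" "\<And>k. submodule (N k) R M" "\<And>k. N (Suc k) \<subseteq> N k"
  obtains n where "N (Suc n) = N n"
proof -
  have "\<exists>n. \<forall>k\<ge>n. N k = N n"
    using conjunct2[OF assms(1)[unfolded artinian_module_def], THEN spec[of _ N]] assms(2,3)
    by simp
  then obtain n where "\<forall>k\<ge>n. N k = N n" ..
  then show ?thesis using that[of n] le_SucI by blast
qed

lemma artinian_module_minimal:
  assumes "artinian_module R M" "N \<in> F" "\<And>N. N \<in> F \<Longrightarrow> submodule N R M"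
  shows "\<exists>N0\<in>F. \<forall>N\<in>F. N \<subseteq> N0 \<longrightarrow> N = N0"
proof -
  let ?r = "{(A, B). A \<in> F \<and> B \<in> F \<and> A \<subset> B}"
  have "wf ?r"
    unfolding wf_iff_no_infinite_down_chain
  proof
    assume "\<exists>f. \<forall>i. (f (Suc i), f i) \<in> ?r"
    then obtain f where "\<forall>i. (f (Suc i), f i) \<in> ?r" ..
    then have f: "f i \<in> F" "f (Suc i) \<subset> f i" for i by auto
    obtain n where "f (Suc n) = f n"
      using artinian_moduleD[OF assms(1), of f] assms(3)[OF f(1)] f(2) by blast
    then show False using f(2)[of n] by simp
  qed
  then obtain N0 where "N0 \<in> F" "\<And>N. (N, N0) \<in> ?r \<Longrightarrow> N \<notin> F"
    using wfE_min[OF _ assms(2)] by blast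
  then show ?thesis by blast
qed

context module
begin

lemma smult_diff_distr:
  "a \<in> carrier R \<Longrightarrow> b \<in> carrier R \<Longrightarrow> x \<in> carrier M \<Longrightarrow>
    (a \<ominus> b) \<odot>\<^bsub>M\<^esub> x = a \<odot>\<^bsub>M\<^esub> x \<ominus>\<^bsub>M\<^esub> b \<odot>\<^bsub>M\<^esub> x"
  by (simp add: a_minus_def smult_l_distr smult_l_minus)

definition cyclic_submodule :: "'c \<Rightarrow> 'c set" where
  "cyclic_submodule x = (\<lambda>a. a \<odot>\<^bsub>M\<^esub> x) ` carrier R"

lemma cyclic_submodule_memI: "a \<in> carrier R \<Longrightarrow> a \<odot>\<^bsub>M\<^esub> x \<in> cyclic_submodule x"
  unfolding cyclic_submodule_def by (rule imageI)

lemma cyclic_submodule_memE: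
  assumes "y \<in> cyclic_submodule x"
  obtains a where "a \<in> carrier R" "y = a \<odot>\<^bsub>M\<^esub> x"
  using assms unfolding cyclic_submodule_def by (rule imageE)

lemma cyclic_submodule_self: "x \<in> carrier M \<Longrightarrow> x \<in> cyclic_submodule x"
  using cyclic_submodule_memI[of \<one> x] by simp

lemma submodule_cyclic_submodule:
  assumes x: "x \<in> carrier M"
  shows "submodule (cyclic_submodule x) R M"
proof (rule submoduleI)
  show "cyclic_submodule x \<subseteq> carrier M"
    using x by (auto elim: cyclic_submodule_memE)
  show "\<zero>\<^bsub>M\<^esub> \<in> cyclic_submodule x"
    using x cyclic_submodule_memI[of \<zero> x] by simp
next
  fix y assume "y \<in> cyclic_submodule x"
  then obtain a where "a \<in> carrier R" "y = a \<odot>\<^bsub>M\<^esub> x" by (rule cyclic_submodule_memE)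
  then show "\<ominus>\<^bsub>M\<^esub> y \<in> cyclic_submodule x"
    using x cyclic_submodule_memI[of "\<ominus> a" x] by (simp add: smult_l_minus)
next
  fix y z assume "y \<in> cyclic_submodule x" "z \<in> cyclic_submodule x"
  then obtain a b where "a \<in> carrier R" "y = a \<odot>\<^bsub>M\<^esub> x" "b \<in> carrier R" "z = b \<odot>\<^bsub>M\<^esub> x"
    by (metis cyclic_submodule_memE)
  then show "y \<oplus>\<^bsub>M\<^esub> z \<in> cyclic_submodule x"
    using x cyclic_submodule_memI[of "a \<oplus> b" x] by (simp add: smult_l_distr)
next
  fix b y assume b: "b \<in> carrier R" and "y \<in> cyclic_submodule x"
  then obtain a where "a \<in> carrier R" "y = a \<odot>\<^bsub>M\<^esub> x" by (metis cyclic_submodule_memE)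
  then show "b \<odot>\<^bsub>M\<^esub> y \<in> cyclic_submodule x"
    using x b cyclic_submodule_memI[of "b \<otimes> a" x] by (simp add: smult_assoc1)
qed

lemma cyclic_submodule_smult_subset:
  assumes "a \<in> carrier R" "x \<in> carrier M"
  shows "cyclic_submodule (a \<odot>\<^bsub>M\<^esub> x) \<subseteq> cyclic_submodule x"
proof
  fix y assume "y \<in> cyclic_submodule (a \<odot>\<^bsub>M\<^esub> x)"
  then obtain b where "b \<in> carrier R" "y = b \<odot>\<^bsub>M\<^esub> (a \<odot>\<^bsub>M\<^esub> x)" by (rule cyclic_submodule_memE)
  then show "y \<in> cyclic_submodule x"
    using assms cyclic_submodule_memI[of "b \<otimes> a" x] by (simp add: smult_assoc1)
qed

text \<open>The elements outside \<open>p\<close> act bijectively on the nonzero cyclic module \<open>R y\<close>,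
  which is therefore an \<open>R\<^sub>p\<close>-module.\<close>
definition local_element :: "'a set \<Rightarrow> 'c \<Rightarrow> bool" where
  "local_element p y \<longleftrightarrow> y \<in> carrier M \<and> y \<noteq> \<zero>\<^bsub>M\<^esub> \<and>
     (\<forall>t \<in> carrier R - p. \<exists>c \<in> carrier R. c \<odot>\<^bsub>M\<^esub> (t \<odot>\<^bsub>M\<^esub> y) = y)"

lemma local_element_cancel:
  assumes y: "local_element p y" and t: "t \<in> carrier R - p"
    and ab: "a \<in> carrier R" "b \<in> carrier R" "(t \<otimes> a) \<odot>\<^bsub>M\<^esub> y = (t \<otimes> b) \<odot>\<^bsub>M\<^esub> y"
  shows "a \<odot>\<^bsub>M\<^esub> y = b \<odot>\<^bsub>M\<^esub> y"
proof -
  obtain c where c: "c \<in> carrier R" "c \<odot>\<^bsub>M\<^esub> (t \<odot>\<^bsub>M\<^esub> y) = y"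
    using y t by (auto simp: local_element_def)
  have yc: "y \<in> carrier M" using y by (simp add: local_element_def)
  have undo: "x \<odot>\<^bsub>M\<^esub> y = c \<odot>\<^bsub>M\<^esub> ((t \<otimes> x) \<odot>\<^bsub>M\<^esub> y)" if x: "x \<in> carrier R" for x
  proof -
    have "x \<odot>\<^bsub>M\<^esub> y = x \<odot>\<^bsub>M\<^esub> (c \<odot>\<^bsub>M\<^esub> (t \<odot>\<^bsub>M\<^esub> y))" using c by simp
    also have "\<dots> = c \<odot>\<^bsub>M\<^esub> (t \<odot>\<^bsub>M\<^esub> (x \<odot>\<^bsub>M\<^esub> y))"
      using x c(1) t yc by (simp add: smult_assoc1[symmetric] m_ac)
    also have "\<dots> = c \<odot>\<^bsub>M\<^esub> ((t \<otimes> x) \<odot>\<^bsub>M\<^esub> y)"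
      using x t yc by (simp add: smult_assoc1)
    finally show ?thesis .
  qed
  show ?thesis using undo[OF ab(1)] undo[OF ab(2)] ab(3) by simp
qed

lemma local_element_smult_nonzero:
  assumes "local_element p y" "u \<in> carrier R - p"
  shows "u \<odot>\<^bsub>M\<^esub> y \<noteq> \<zero>\<^bsub>M\<^esub>"
proof
  assume "u \<odot>\<^bsub>M\<^esub> y = \<zero>\<^bsub>M\<^esub>"
  then have "(u \<otimes> \<one>) \<odot>\<^bsub>M\<^esub> y = (u \<otimes> \<zero>) \<odot>\<^bsub>M\<^esub> y"
    using assms by (simp add: local_element_def)
  then have "\<one> \<odot>\<^bsub>M\<^esub> y = \<zero> \<odot>\<^bsub>M\<^esub> y"
    using local_element_cancel[OF assms] by simp
  then show False using assms(1) by (simp add: local_element_def)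
qed

lemma local_element_maximalideal:
  assumes p: "primeideal p R" and y: "local_element p y"
  shows "maximalideal p R"
proof (rule maximalidealI)
  show "ideal p R" using p by (rule primeideal.axioms(1))
  show "carrier R \<noteq> p" using p by (rule primeideal.I_notcarr)
next
  fix I assume I: "ideal I R" "p \<subseteq> I" "I \<subseteq> carrier R"
  show "I = p \<or> I = carrier R"
  proof (cases "I = p")
    case False
    then obtain a where a: "a \<in> I" "a \<in> carrier R - p" using I by blast
    then obtain c where c: "c \<in> carrier R" "c \<odot>\<^bsub>M\<^esub> (a \<odot>\<^bsub>M\<^esub> y) = y"
      using y by (auto simp: local_element_def)
    have yc: "y \<in> carrier M" using y by (simp add: local_element_def)
    have ac: "a \<in> carrier R" using a by simp
    text \<open>\<open>c\<close> is an inverse of \<open>a\<close> modulo \<open>p\<close>, because \<open>1 - c a\<close> kills \<open>y\<close>.\<close>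
    have "(\<one> \<ominus> c \<otimes> a) \<odot>\<^bsub>M\<^esub> y = y \<ominus>\<^bsub>M\<^esub> c \<odot>\<^bsub>M\<^esub> (a \<odot>\<^bsub>M\<^esub> y)"
      using c ac yc by (simp add: smult_diff_distr smult_assoc1)
    then have "(\<one> \<ominus> c \<otimes> a) \<odot>\<^bsub>M\<^esub> y = \<zero>\<^bsub>M\<^esub>"
      using c(2) yc by (simp add: a_minus_def M.r_neg)
    then have "\<one> \<ominus> c \<otimes> a \<in> I"
      using local_element_smult_nonzero[OF y, of "\<one> \<ominus> c \<otimes> a"] c ac I(2) by auto
    moreover have "c \<otimes> a \<in> I" using ideal.I_l_closed[OF I(1) a(1) c(1)] .
    ultimately have "(\<one> \<ominus> c \<otimes> a) \<oplus> c \<otimes> a \<in> I"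
      by (rule additive_subgroup.a_closed[OF ideal.axioms(1)[OF I(1)]])
    moreover have "(\<one> \<ominus> c \<otimes> a) \<oplus> c \<otimes> a = \<one>" using c ac by algebra
    ultimately show ?thesis using ideal.one_imp_carrier[OF I(1)] by simp
  qed simp
qed

definition vanishing_at :: "'a set set \<Rightarrow> 'c set" where
  "vanishing_at P = {x \<in> carrier M. \<forall>q\<in>P. \<exists>s\<in>carrier R - q. s \<odot>\<^bsub>M\<^esub> x = \<zero>\<^bsub>M\<^esub>}"

lemma submodule_vanishing_at:
  assumes P: "\<And>q. q \<in> P \<Longrightarrow> primeideal q R"
  shows "submodule (vanishing_at P) R M"
proof (rule submoduleI)
  show "vanishing_at P \<subseteq> carrier M" by (auto simp: vanishing_at_def)
  show "\<zero>\<^bsub>M\<^esub> \<in> vanishing_at P"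
    using primeideal.one_notin[OF P] by (fastforce simp: vanishing_at_def)
next
  fix x assume "x \<in> vanishing_at P"
  then show "\<ominus>\<^bsub>M\<^esub> x \<in> vanishing_at P"
    by (fastforce simp: vanishing_at_def smult_r_minus)
next
  fix x z assume x: "x \<in> vanishing_at P" and z: "z \<in> vanishing_at P"
  have "\<exists>s\<in>carrier R - q. s \<odot>\<^bsub>M\<^esub> (x \<oplus>\<^bsub>M\<^esub> z) = \<zero>\<^bsub>M\<^esub>" if q: "q \<in> P" for q
  proof -
    obtain s where s: "s \<in> carrier R - q" "s \<odot>\<^bsub>M\<^esub> x = \<zero>\<^bsub>M\<^esub>"
      using x q by (auto simp: vanishing_at_def)
    obtain t where t: "t \<in> carrier R - q" "t \<odot>\<^bsub>M\<^esub> z = \<zero>\<^bsub>M\<^esub>"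
      using z q by (auto simp: vanishing_at_def)
    have xz: "x \<in> carrier M" "z \<in> carrier M" using x z by (auto simp: vanishing_at_def)
    have "(t \<otimes> s) \<odot>\<^bsub>M\<^esub> (x \<oplus>\<^bsub>M\<^esub> z) = t \<odot>\<^bsub>M\<^esub> (s \<odot>\<^bsub>M\<^esub> x) \<oplus>\<^bsub>M\<^esub> s \<odot>\<^bsub>M\<^esub> (t \<odot>\<^bsub>M\<^esub> z)"
      using s(1) t(1) xz by (simp add: smult_r_distr smult_assoc1[symmetric] m_comm)
    also have "\<dots> = \<zero>\<^bsub>M\<^esub>" using s t by simp
    finally show ?thesis using primeideal.mult_notin[OF P[OF q] t(1) s(1)] by blast
  qed
  then show "x \<oplus>\<^bsub>M\<^esub> z \<in> vanishing_at P" using x z by (simp add: vanishing_at_def)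
next
  fix a x assume a: "a \<in> carrier R" and x: "x \<in> vanishing_at P"
  have "\<exists>s\<in>carrier R - q. s \<odot>\<^bsub>M\<^esub> (a \<odot>\<^bsub>M\<^esub> x) = \<zero>\<^bsub>M\<^esub>" if q: "q \<in> P" for q
  proof -
    obtain s where s: "s \<in> carrier R - q" "s \<odot>\<^bsub>M\<^esub> x = \<zero>\<^bsub>M\<^esub>"
      using x q by (auto simp: vanishing_at_def)
    have "s \<odot>\<^bsub>M\<^esub> (a \<odot>\<^bsub>M\<^esub> x) = a \<odot>\<^bsub>M\<^esub> (s \<odot>\<^bsub>M\<^esub> x)"
      using a s(1) x by (simp add: vanishing_at_def smult_assoc1[symmetric] m_comm)
    then show ?thesis using s a by auto
  qed
  then show "a \<odot>\<^bsub>M\<^esub> x \<in> vanishing_at P" using a x by (simp add: vanishing_at_def)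
qed

end

lemma localization_trivial:
  fixes R :: "'a ring" (structure) and M :: "('a, 'b) module"
  assumes M: "module R M" and S: "S \<subseteq> carrier R" "\<one> \<in> S"
    and torsion: "\<And>x. x \<in> carrier M \<Longrightarrow> \<exists>u\<in>S. u \<odot>\<^bsub>M\<^esub> x = \<zero>\<^bsub>M\<^esub>"
  shows "carrier (localization R M S) = {\<zero>\<^bsub>localization R M S\<^esub>}"
proof -
  interpret module R M by (rule M)
  let ?A = "carrier M \<times> S"
  have "loc_rel R M S = ?A \<times> ?A"
  proof (intro equalityI subsetI)
    fix P assume "P \<in> ?A \<times> ?A"
    then obtain x s y t where P: "P = ((x, s), (y, t))" "x \<in> carrier M" "y \<in> carrier M" "s \<in> S" "t \<in> S"
      by auto
    then have "t \<odot>\<^bsub>M\<^esub> x \<ominus>\<^bsub>M\<^esub> s \<odot>\<^bsub>M\<^esub> y \<in> carrier M" using S(1) by auto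
    then show "P \<in> loc_rel R M S" using torsion P by (auto simp: loc_rel_def)
  qed (auto simp: loc_rel_def)
  moreover have "(\<zero>\<^bsub>M\<^esub>, \<one>) \<in> ?A" using S(2) by simp
  ultimately show ?thesis by (auto simp: localization_def quotient_def)
qed

lemma Supp_nonzero_element:
  fixes R :: "'a ring" (structure) and M :: "('a, 'b) module"
  assumes M: "module R M" and p: "p \<in> Supp R M"
  shows "\<exists>x\<in>carrier M. \<forall>u\<in>carrier R - p. u \<odot>\<^bsub>M\<^esub> x \<noteq> \<zero>\<^bsub>M\<^esub>"
proof (rule ccontr)
  assume "\<not> ?thesis"
  moreover have "primeideal p R" using p by (simp add: Supp_def Spec_def)
  ultimately have "carrier (localization R M (carrier R - p)) = {\<zero>\<^bsub>localization R M (carrier R - p)\<^esub>}"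
    using primeideal.one_notin by (intro localization_trivial[OF M]) auto
  then show False using p by (simp add: Supp_def)
qed

lemma some_in_class_value:
  assumes v: "\<And>P Q. (P, Q) \<in> r \<Longrightarrow> v P = v Q" and XX: "XX \<in> A // r" and P: "P \<in> XX"
  shows "v (SOME P. P \<in> XX) = v P"
proof -
  obtain q where q: "XX = r `` {q}" using XX by (rule quotientE)
  have "(SOME P. P \<in> XX) \<in> XX" using P by (rule someI)
  then show ?thesis using P v unfolding q by (metis Image_singleton_iff)
qed

lemma loc_rel_ring_module:
  fixes R :: "'a ring" (structure)
  shows "((a, s), (b, t)) \<in> loc_rel R (ring_module R) S \<longleftrightarrow>
    a \<in> carrier R \<and> b \<in> carrier R \<and> s \<in> S \<and> t \<in> S \<and> (\<exists>u\<in>S. u \<otimes> (t \<otimes> a \<ominus> s \<otimes> b) = \<zero>)"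
proof -
  have "a_minus (ring_module R) = a_minus R"
    by (intro ext) (simp add: ring_module_def a_minus_def a_inv_def m_inv_def)
  then show ?thesis by (simp add: loc_rel_def ring_module_def)
qed

text \<open>Universal property of \<open>S\<inverse>R\<close>: \<open>v (a, s)\<close> prescribes the image of the fraction \<open>a/s\<close>.\<close>
lemma localization_mod_hom_exists:
  fixes R :: "'a ring" (structure) and N :: "('a, 'c) module"
  assumes R: "ring R"
    and S: "S \<subseteq> carrier R" "\<And>s t. s \<in> S \<Longrightarrow> t \<in> S \<Longrightarrow> s \<otimes> t \<in> S"
    and v_rel: "\<And>P Q. (P, Q) \<in> loc_rel R (ring_module R) S \<Longrightarrow> v P = v Q"
    and v_closed: "\<And>a s. a \<in> carrier R \<Longrightarrow> s \<in> S \<Longrightarrow> v (a, s) \<in> carrier N"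
    and v_add: "\<And>a s b t. \<lbrakk>a \<in> carrier R; s \<in> S; b \<in> carrier R; t \<in> S\<rbrakk> \<Longrightarrow>
      v (t \<otimes> a \<oplus> s \<otimes> b, s \<otimes> t) = v (a, s) \<oplus>\<^bsub>N\<^esub> v (b, t)"
    and v_smult: "\<And>r a s. \<lbrakk>r \<in> carrier R; a \<in> carrier R; s \<in> S\<rbrakk> \<Longrightarrow>
      v (r \<otimes> a, s) = r \<odot>\<^bsub>N\<^esub> v (a, s)"
  shows "\<exists>f \<in> mod_hom R (localization R (ring_module R) S) N.
    \<forall>P \<in> carrier R \<times> S. f (loc_rel R (ring_module R) S `` {P}) = v P"
proof -
  interpret ring R by (rule R)
  let ?rel = "loc_rel R (ring_module R) S" and ?L = "localization R (ring_module R) S"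
  have carrier_L: "carrier ?L = (carrier R \<times> S) // ?rel"
    by (simp add: localization_def ring_module_def)
  have refl: "(P, P) \<in> ?rel" if "P \<in> carrier R \<times> S" for P
    using that S(1) by (auto simp: loc_rel_ring_module a_minus_def r_neg subset_iff)
  have mem: "P \<in> carrier R \<times> S" if "P \<in> XX" "XX \<in> carrier ?L" for P XX
    using that unfolding carrier_L by (auto simp: loc_rel_def ring_module_def elim!: quotientE)
  have nonempty: "\<exists>a s. (a, s) \<in> XX" if XX: "XX \<in> carrier ?L" for XX
  proof -
    obtain q where "XX = ?rel `` {q}" "q \<in> carrier R \<times> S"
      using XX unfolding carrier_L by (rule quotientE)
    then have "q \<in> XX" using refl by simp
    then show ?thesis by (cases q) blast
  qed
  define f where "f XX = v (SOME P. P \<in> XX)" for XX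
  have f_val: "f XX = v P" if "XX \<in> carrier ?L" "P \<in> XX" for XX P
  proof -
    have "XX \<in> (carrier R \<times> S) // ?rel" using that(1) carrier_L by simp
    from v_rel this that(2) show ?thesis unfolding f_def by (rule some_in_class_value)
  qed
  have "f \<in> mod_hom R ?L N"
    unfolding mod_hom_def
  proof (intro CollectI conjI ballI)
    show "f \<in> carrier ?L \<rightarrow> carrier N"
    proof
      fix XX assume XX: "XX \<in> carrier ?L"
      then obtain a s where as: "(a, s) \<in> XX" using nonempty by blast
      then have "(a, s) \<in> carrier R \<times> S" using mem XX by blast
      then show "f XX \<in> carrier N" using f_val[OF XX as] v_closed by simp
    qed
  next
    fix XX YY assume XX: "XX \<in> carrier ?L" and YY: "YY \<in> carrier ?L"
    have sum: "XX \<oplus>\<^bsub>?L\<^esub> YY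
        = (\<Union>(a, s)\<in>XX. \<Union>(b, t)\<in>YY. ?rel `` {(t \<otimes> a \<oplus> s \<otimes> b, s \<otimes> t)})"
      by (simp add: localization_def ring_module_def)
    obtain a s b t where as: "(a, s) \<in> XX" and bt: "(b, t) \<in> YY" using nonempty XX YY by blast
    have "(a, s) \<in> carrier R \<times> S" "(b, t) \<in> carrier R \<times> S" using mem as bt XX YY by blast+
    then have "(t \<otimes> a \<oplus> s \<otimes> b, s \<otimes> t) \<in> carrier R \<times> S" using S by auto
    then have "(t \<otimes> a \<oplus> s \<otimes> b, s \<otimes> t) \<in> XX \<oplus>\<^bsub>?L\<^esub> YY"
      unfolding sum using as bt refl by blast
    then have "(SOME P. P \<in> XX \<oplus>\<^bsub>?L\<^esub> YY) \<in> XX \<oplus>\<^bsub>?L\<^esub> YY" by (rule someI)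
    then obtain a' s' b' t' where as': "(a', s') \<in> XX" and bt': "(b', t') \<in> YY"
      and rel: "((t' \<otimes> a' \<oplus> s' \<otimes> b', s' \<otimes> t'), (SOME P. P \<in> XX \<oplus>\<^bsub>?L\<^esub> YY)) \<in> ?rel"
      unfolding sum by blast
    have "(a', s') \<in> carrier R \<times> S" "(b', t') \<in> carrier R \<times> S"
      using mem as' bt' XX YY by blast+
    then have "v (t' \<otimes> a' \<oplus> s' \<otimes> b', s' \<otimes> t') = v (a', s') \<oplus>\<^bsub>N\<^esub> v (b', t')"
      using v_add by simp
    then show "f (XX \<oplus>\<^bsub>?L\<^esub> YY) = f XX \<oplus>\<^bsub>N\<^esub> f YY"
      unfolding f_def[of "XX \<oplus>\<^bsub>?L\<^esub> YY"] v_rel[OF rel, symmetric] f_val[OF XX as'] f_val[OF YY bt'] .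
  next
    fix r XX assume r: "r \<in> carrier R" and XX: "XX \<in> carrier ?L"
    have smult: "r \<odot>\<^bsub>?L\<^esub> XX = (\<Union>(a, s)\<in>XX. ?rel `` {(r \<otimes> a, s)})"
      by (simp add: localization_def ring_module_def)
    obtain a s where as: "(a, s) \<in> XX" using nonempty XX by blast
    then have "(a, s) \<in> carrier R \<times> S" using mem XX by blast
    then have "(r \<otimes> a, s) \<in> carrier R \<times> S" using r by simp
    then have "(r \<otimes> a, s) \<in> r \<odot>\<^bsub>?L\<^esub> XX"
      unfolding smult using as refl by blast
    then have "(SOME P. P \<in> r \<odot>\<^bsub>?L\<^esub> XX) \<in> r \<odot>\<^bsub>?L\<^esub> XX" by (rule someI)
    then obtain a' s' where as': "(a', s') \<in> XX"
      and rel: "((r \<otimes> a', s'), (SOME P. P \<in> r \<odot>\<^bsub>?L\<^esub> XX)) \<in> ?rel"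
      unfolding smult by blast
    have "(a', s') \<in> carrier R \<times> S" using mem as' XX by blast
    then have "v (r \<otimes> a', s') = r \<odot>\<^bsub>N\<^esub> v (a', s')" using v_smult r by simp
    then show "f (r \<odot>\<^bsub>?L\<^esub> XX) = r \<odot>\<^bsub>N\<^esub> f XX"
      unfolding f_def[of "r \<odot>\<^bsub>?L\<^esub> XX"] v_rel[OF rel, symmetric] f_val[OF XX as'] .
  qed
  moreover have "f (?rel `` {P}) = v P" if "P \<in> carrier R \<times> S" for P
  proof (rule f_val)
    show "?rel `` {P} \<in> carrier ?L" unfolding carrier_L using that by (rule quotientI)
    show "P \<in> ?rel `` {P}" using refl[OF that] by simp
  qed
  ultimately show ?thesis by blast
qed

lemma local_element_Cos:
  fixes R :: "'a ring" (structure) and M :: "('a, 'b) module"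
  assumes M: "module R M" and p: "primeideal p R" and y: "module.local_element R M p y"
  shows "p \<in> Cos R M"
proof -
  interpret module R M by (rule M)
  let ?S = "carrier R - p"
  let ?rel = "loc_rel R (ring_module R) ?S" and ?L = "localization R (ring_module R) ?S"
  have yc: "y \<in> carrier M" and y0: "y \<noteq> \<zero>\<^bsub>M\<^esub>" using y by (simp_all add: local_element_def)
  define recip where "recip s = (SOME c. c \<in> carrier R \<and> c \<odot>\<^bsub>M\<^esub> (s \<odot>\<^bsub>M\<^esub> y) = y)" for s
  have recip: "recip s \<in> carrier R" "(recip s \<otimes> s) \<odot>\<^bsub>M\<^esub> y = y" if s: "s \<in> ?S" for s
  proof -
    have "\<exists>c. c \<in> carrier R \<and> c \<odot>\<^bsub>M\<^esub> (s \<odot>\<^bsub>M\<^esub> y) = y" using y s by (auto simp: local_element_def)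
    then have "recip s \<in> carrier R \<and> recip s \<odot>\<^bsub>M\<^esub> (s \<odot>\<^bsub>M\<^esub> y) = y"
      unfolding recip_def by (rule someI_ex)
    then show "recip s \<in> carrier R" "(recip s \<otimes> s) \<odot>\<^bsub>M\<^esub> y = y" using s yc by (simp_all add: smult_assoc1)
  qed
  have scale: "((c \<otimes> s) \<otimes> (a \<otimes> recip s)) \<odot>\<^bsub>M\<^esub> y = (c \<otimes> a) \<odot>\<^bsub>M\<^esub> y"
    if "c \<in> carrier R" "s \<in> ?S" "a \<in> carrier R" for c s a
  proof -
    have "(c \<otimes> s) \<otimes> (a \<otimes> recip s) = (c \<otimes> a) \<otimes> (recip s \<otimes> s)"
      using that recip(1)[OF that(2)] DiffD1[OF that(2)] by algebra
    then show ?thesis using that recip[OF that(2)] yc by (simp add: smult_assoc1)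
  qed
  define v where "v P = (fst P \<otimes> recip (snd P)) \<odot>\<^bsub>M\<^esub> y" for P
  text \<open>\<open>v (a, s)\<close> is the element \<open>s\<inverse> a y\<close> of \<open>R y\<close>; equalities between such elements
    are checked after multiplying by a suitable element of \<open>S\<close>.\<close>
  have v_rel: "v P = v Q" if rel: "(P, Q) \<in> ?rel" for P Q
  proof -
    obtain a s b t where PQ: "P = (a, s)" "Q = (b, t)" by (cases P, cases Q)
    then obtain u where as: "a \<in> carrier R" "s \<in> ?S" and bt: "b \<in> carrier R" "t \<in> ?S"
      and u: "u \<in> ?S" "u \<otimes> (t \<otimes> a \<ominus> s \<otimes> b) = \<zero>"
      using rel by (auto simp: loc_rel_ring_module)
    have ut: "u \<otimes> t \<in> ?S" and us: "u \<otimes> s \<in> ?S" using primeideal.mult_notin[OF p] u as bt by auto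
    have stu: "s \<in> carrier R" "t \<in> carrier R" "u \<in> carrier R" using as bt u by auto
    have "(u \<otimes> t) \<otimes> a = (u \<otimes> s) \<otimes> b"
    proof -
      have "(u \<otimes> t) \<otimes> a = u \<otimes> (t \<otimes> a \<ominus> s \<otimes> b) \<oplus> (u \<otimes> s) \<otimes> b"
        using as bt stu by algebra
      then show ?thesis using as bt u by simp
    qed
    moreover have "((u \<otimes> t) \<otimes> s) \<otimes> (b \<otimes> recip t) = ((u \<otimes> s) \<otimes> t) \<otimes> (b \<otimes> recip t)"
      using as bt stu recip(1)[OF bt(2)] by algebra
    ultimately have eq: "((u \<otimes> t) \<otimes> s \<otimes> (a \<otimes> recip s)) \<odot>\<^bsub>M\<^esub> y
        = ((u \<otimes> t) \<otimes> s \<otimes> (b \<otimes> recip t)) \<odot>\<^bsub>M\<^esub> y"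
      using scale as bt ut us by simp
    have "(a \<otimes> recip s) \<odot>\<^bsub>M\<^esub> y = (b \<otimes> recip t) \<odot>\<^bsub>M\<^esub> y"
      by (rule local_element_cancel[OF y primeideal.mult_notin[OF p ut as(2)] _ _ eq])
        (use as bt recip(1) in auto)
    then show ?thesis unfolding PQ v_def by simp
  qed
  have v_add: "v (t \<otimes> a \<oplus> s \<otimes> b, s \<otimes> t) = v (a, s) \<oplus>\<^bsub>M\<^esub> v (b, t)"
    if as: "a \<in> carrier R" "s \<in> ?S" and bt: "b \<in> carrier R" "t \<in> ?S" for a s b t
  proof -
    have st: "s \<otimes> t \<in> ?S" using primeideal.mult_notin[OF p as(2) bt(2)] .
    have stc: "s \<in> carrier R" "t \<in> carrier R" using as bt by auto
    have "((s \<otimes> t) \<otimes> ((t \<otimes> a \<oplus> s \<otimes> b) \<otimes> recip (s \<otimes> t))) \<odot>\<^bsub>M\<^esub> y = (t \<otimes> a \<oplus> s \<otimes> b) \<odot>\<^bsub>M\<^esub> y"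
      using scale[of \<one> "s \<otimes> t" "t \<otimes> a \<oplus> s \<otimes> b"] as bt st by simp
    also have "\<dots> = ((t \<otimes> s) \<otimes> (a \<otimes> recip s)) \<odot>\<^bsub>M\<^esub> y \<oplus>\<^bsub>M\<^esub> ((s \<otimes> t) \<otimes> (b \<otimes> recip t)) \<odot>\<^bsub>M\<^esub> y"
      using scale as bt yc by (simp add: smult_l_distr)
    also have "\<dots> = ((s \<otimes> t) \<otimes> (a \<otimes> recip s \<oplus> b \<otimes> recip t)) \<odot>\<^bsub>M\<^esub> y"
    proof -
      have "(s \<otimes> t) \<otimes> (a \<otimes> recip s \<oplus> b \<otimes> recip t) = (t \<otimes> s) \<otimes> (a \<otimes> recip s) \<oplus> (s \<otimes> t) \<otimes> (b \<otimes> recip t)"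
        using as bt stc recip(1)[OF as(2)] recip(1)[OF bt(2)] by algebra
      then show ?thesis using as bt recip(1) yc by (simp add: smult_l_distr)
    qed
    finally have "((t \<otimes> a \<oplus> s \<otimes> b) \<otimes> recip (s \<otimes> t)) \<odot>\<^bsub>M\<^esub> y
        = (a \<otimes> recip s \<oplus> b \<otimes> recip t) \<odot>\<^bsub>M\<^esub> y"
      by (rule local_element_cancel[OF y st, rotated 2]) (use as bt st recip(1) in auto)
    then show ?thesis unfolding v_def using as bt recip(1) yc by (simp add: smult_l_distr)
  qed
  have v_smult: "v (r \<otimes> a, s) = r \<odot>\<^bsub>M\<^esub> v (a, s)"
    if "r \<in> carrier R" "a \<in> carrier R" "s \<in> ?S" for r a s
    unfolding v_def using that recip(1) yc by (simp add: m_assoc smult_assoc1)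
  have v_closed: "v (a, s) \<in> carrier M" if "a \<in> carrier R" "s \<in> ?S" for a s
    unfolding v_def using that recip(1) yc by simp
  have "\<exists>f \<in> mod_hom R ?L M. \<forall>P \<in> carrier R \<times> ?S. f (?rel `` {P}) = v P"
    using primeideal.mult_notin[OF p]
    by (intro localization_mod_hom_exists[OF ring_axioms _ _ v_rel v_closed v_add v_smult]) auto
  then obtain f where f: "f \<in> mod_hom R ?L M" and f_val: "\<forall>P \<in> carrier R \<times> ?S. f (?rel `` {P}) = v P"
    by blast
  have one: "\<one> \<in> ?S" by (rule primeideal.one_notin[OF p])
  have "v (\<one>, \<one>) = y"
  proof -
    have "(\<one> \<otimes> (\<one> \<otimes> recip \<one>)) \<odot>\<^bsub>M\<^esub> y = (\<one> \<otimes> \<one>) \<odot>\<^bsub>M\<^esub> y"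
      using scale[OF _ one, of \<one> \<one>] one by simp
    then have "(\<one> \<otimes> recip \<one>) \<odot>\<^bsub>M\<^esub> y = \<one> \<odot>\<^bsub>M\<^esub> y"
      by (rule local_element_cancel[OF y one, rotated 2]) (use recip(1)[OF one] in auto)
    then show ?thesis unfolding v_def using yc by simp
  qed
  then have "f (?rel `` {(\<one>, \<one>)}) \<noteq> \<zero>\<^bsub>M\<^esub>" using f_val one y0 by simp
  moreover have "?rel `` {(\<one>, \<one>)} \<in> carrier ?L"
    using one by (simp add: localization_def ring_module_def quotientI)
  ultimately show ?thesis using f p unfolding Cos_def Spec_def by blast
qed

locale artinian = module R M
  for R :: "'a ring" (structure) and M :: "('a, 'b) module" (structure) +
  assumes artinian: "artinian_module R M"
begin

lemma local_element_nilpotent: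
  assumes p: "primeideal p R" and y: "local_element p y" and a: "a \<in> p"
  shows "\<exists>n::nat. (a [^] n) \<odot>\<^bsub>M\<^esub> y = \<zero>\<^bsub>M\<^esub>"
proof -
  have yc: "y \<in> carrier M" using y by (simp add: local_element_def)
  have pI: "ideal p R" using p by (rule primeideal.axioms(1))
  have ac: "a \<in> carrier R" using ideal.Icarr[OF pI a] .
  let ?N = "\<lambda>k. cyclic_submodule ((a [^] (k::nat)) \<odot>\<^bsub>M\<^esub> y)"
  have sub: "submodule (?N k) R M" for k
    using ac yc by (simp add: submodule_cyclic_submodule)
  have pow_Suc: "(a [^] Suc k) \<odot>\<^bsub>M\<^esub> y = a \<odot>\<^bsub>M\<^esub> ((a [^] k) \<odot>\<^bsub>M\<^esub> y)" for k
  proof -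
    have "(a [^] Suc k) \<odot>\<^bsub>M\<^esub> y = (a \<otimes> a [^] k) \<odot>\<^bsub>M\<^esub> y"
      by (simp only: nat_pow_Suc2[OF ac])
    also have "\<dots> = a \<odot>\<^bsub>M\<^esub> ((a [^] k) \<odot>\<^bsub>M\<^esub> y)"
      using ac yc by (intro smult_assoc1) simp_all
    finally show ?thesis .
  qed
  have dec: "?N (Suc k) \<subseteq> ?N k" for k
    unfolding pow_Suc using ac yc by (intro cyclic_submodule_smult_subset) simp_all
  obtain n where "?N (Suc n) = ?N n"
    by (rule artinian_moduleD[where N = ?N, OF artinian sub dec])
  then have "(a [^] n) \<odot>\<^bsub>M\<^esub> y \<in> ?N (Suc n)"
    using cyclic_submodule_self[of "(a [^] n) \<odot>\<^bsub>M\<^esub> y"] ac yc by simp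
  then obtain r where r: "r \<in> carrier R"
    "(a [^] n) \<odot>\<^bsub>M\<^esub> y = r \<odot>\<^bsub>M\<^esub> ((a [^] Suc n) \<odot>\<^bsub>M\<^esub> y)"
    by (rule cyclic_submodule_memE)
  have stable: "(a [^] n) \<odot>\<^bsub>M\<^esub> y = (r \<otimes> a) \<odot>\<^bsub>M\<^esub> ((a [^] n) \<odot>\<^bsub>M\<^esub> y)"
  proof -
    have "(a [^] n) \<odot>\<^bsub>M\<^esub> y = r \<odot>\<^bsub>M\<^esub> (a \<odot>\<^bsub>M\<^esub> ((a [^] n) \<odot>\<^bsub>M\<^esub> y))"
      using r(2) by (simp only: pow_Suc)
    also have "\<dots> = (r \<otimes> a) \<odot>\<^bsub>M\<^esub> ((a [^] n) \<odot>\<^bsub>M\<^esub> y)"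
      using r(1) ac yc by (simp add: smult_assoc1)
    finally show ?thesis .
  qed
  text \<open>So \<open>1 - r a\<close> kills \<open>a\<^sup>n y\<close>, and it lies outside \<open>p\<close>.\<close>
  define e where "e = \<one> \<ominus> r \<otimes> a"
  have "e \<in> carrier R - p"
  proof
    show "e \<in> carrier R" using r(1) ac by (simp add: e_def)
    show "e \<notin> p"
    proof
      assume "e \<in> p"
      moreover have "r \<otimes> a \<in> p" using ideal.I_l_closed[OF pI a r(1)] .
      ultimately have "e \<oplus> r \<otimes> a \<in> p"
        by (rule additive_subgroup.a_closed[OF ideal.axioms(1)[OF pI]])
      moreover have "e \<oplus> r \<otimes> a = \<one>" using r(1) ac unfolding e_def by algebra
      ultimately show False using primeideal.one_notin[OF p] by simp
    qed
  qed
  moreover have "(e \<otimes> a [^] n) \<odot>\<^bsub>M\<^esub> y = (e \<otimes> \<zero>) \<odot>\<^bsub>M\<^esub> y"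
  proof -
    have "(e \<otimes> a [^] n) \<odot>\<^bsub>M\<^esub> y
        = (a [^] n) \<odot>\<^bsub>M\<^esub> y \<ominus>\<^bsub>M\<^esub> (r \<otimes> a) \<odot>\<^bsub>M\<^esub> ((a [^] n) \<odot>\<^bsub>M\<^esub> y)"
      using r(1) ac yc by (simp add: e_def smult_assoc1 smult_diff_distr)
    also have "\<dots> = \<zero>\<^bsub>M\<^esub>"
      unfolding stable[symmetric] using ac yc by (simp add: a_minus_def M.r_neg)
    finally show ?thesis using r(1) ac yc by (simp add: e_def)
  qed
  ultimately have "(a [^] n) \<odot>\<^bsub>M\<^esub> y = \<zero>\<^bsub>M\<^esub>"
    using local_element_cancel[OF y, of e "a [^] n" \<zero>] ac yc by auto
  then show ?thesis ..
qed

lemma artinian_local_element: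
  assumes p: "primeideal p R" and x: "x \<in> carrier M"
    and nonzero: "\<forall>u\<in>carrier R - p. u \<odot>\<^bsub>M\<^esub> x \<noteq> \<zero>\<^bsub>M\<^esub>"
  shows "\<exists>y. local_element p y"
proof -
  let ?F = "(\<lambda>s. cyclic_submodule (s \<odot>\<^bsub>M\<^esub> x)) ` (carrier R - p)"
  have sub: "submodule N R M" if "N \<in> ?F" for N
    using that x by (auto intro!: submodule_cyclic_submodule)
  obtain N0 where N0: "N0 \<in> ?F" and min: "\<forall>N\<in>?F. N \<subseteq> N0 \<longrightarrow> N = N0"
    using artinian_module_minimal[where F = ?F, OF artinian imageI[OF primeideal.one_notin[OF p]] sub]
    by blast
  obtain s where N0_def: "N0 = cyclic_submodule (s \<odot>\<^bsub>M\<^esub> x)" and s: "s \<in> carrier R - p"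
    using N0 by (rule imageE)
  let ?y = "s \<odot>\<^bsub>M\<^esub> x"
  have yc: "?y \<in> carrier M" using s x by simp
  have "\<exists>c\<in>carrier R. c \<odot>\<^bsub>M\<^esub> (t \<odot>\<^bsub>M\<^esub> ?y) = ?y" if t: "t \<in> carrier R - p" for t
  proof -
    have ty: "t \<odot>\<^bsub>M\<^esub> ?y = (t \<otimes> s) \<odot>\<^bsub>M\<^esub> x" using t s x by (simp add: smult_assoc1)
    have "cyclic_submodule (t \<odot>\<^bsub>M\<^esub> ?y) \<in> ?F"
      unfolding ty using primeideal.mult_notin[OF p t s] by (rule imageI)
    moreover have "cyclic_submodule (t \<odot>\<^bsub>M\<^esub> ?y) \<subseteq> N0"
      unfolding N0_def using t yc by (intro cyclic_submodule_smult_subset) auto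
    ultimately have "cyclic_submodule (t \<odot>\<^bsub>M\<^esub> ?y) = N0" using min by blast
    then have "?y \<in> cyclic_submodule (t \<odot>\<^bsub>M\<^esub> ?y)"
      using cyclic_submodule_self[OF yc] by (simp only: N0_def)
    then obtain c where c: "c \<in> carrier R" "?y = c \<odot>\<^bsub>M\<^esub> (t \<odot>\<^bsub>M\<^esub> ?y)"
      by (rule cyclic_submodule_memE)
    then show ?thesis using c(2)[symmetric] by blast
  qed
  then have "local_element p ?y"
    unfolding local_element_def using yc nonzero s by blast
  then show ?thesis ..
qed

lemma Supp_local_element:
  assumes Supp: "p \<in> Supp R M"
  shows "\<exists>y. local_element p y"
proof -
  have "module R M" using artinian by (simp add: artinian_module_def)
  then obtain x where "x \<in> carrier M" "\<forall>u\<in>carrier R - p. u \<odot>\<^bsub>M\<^esub> x \<noteq> \<zero>\<^bsub>M\<^esub>"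
    using Supp_nonzero_element[OF _ Supp] by blast
  moreover have "primeideal p R" using Supp by (simp add: Supp_def Spec_def)
  ultimately show ?thesis using artinian_local_element by blast
qed

lemma Supp_maximalideal: "p \<in> Supp R M \<Longrightarrow> maximalideal p R"
  using Supp_local_element local_element_maximalideal by (auto simp: Supp_def Spec_def)

lemma finite_Supp: "finite (Supp R M)"
proof (rule ccontr)
  assume "infinite (Supp R M)"
  then obtain g :: "nat \<Rightarrow> 'a set" where g: "inj g" "range g \<subseteq> Supp R M"
    using infinite_countable_subset by blast
  have gS: "g i \<in> Supp R M" for i using g(2) by blast
  have max: "maximalideal (g i) R" for i using Supp_maximalideal[OF gS] .
  have prime: "primeideal (g i) R" for i using maximalideal_prime[OF max] .
  have "\<forall>i. \<exists>y. local_element (g i) y" using Supp_local_element[OF gS] by blast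
  then obtain y where y: "\<forall>i. local_element (g i) (y i)" by (rule choice[THEN exE])
  let ?K = "\<lambda>j. vanishing_at (g ` {..<j})"
  have sub: "submodule (?K j) R M" for j by (rule submodule_vanishing_at) (auto simp: prime)
  have dec: "?K (Suc j) \<subseteq> ?K j" for j by (auto simp: vanishing_at_def)
  obtain n where n: "?K (Suc n) = ?K n" by (rule artinian_moduleD[where N = ?K, OF artinian sub dec])
  have yn: "local_element (g n) (y n)" using y by blast
  have "\<exists>s\<in>carrier R - g i. s \<odot>\<^bsub>M\<^esub> y n = \<zero>\<^bsub>M\<^esub>" if i: "i < n" for i
  proof -
    have "g i \<noteq> g n" using inj_eq[OF g(1)] i by simp
    then have "\<not> g n \<subseteq> g i" using maximalideal_subset_primeideal[OF max prime] by blast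
    then obtain a where a: "a \<in> g n" "a \<notin> g i" by blast
    obtain k :: nat where "(a [^] k) \<odot>\<^bsub>M\<^esub> y n = \<zero>\<^bsub>M\<^esub>"
      using local_element_nilpotent[OF prime yn a(1)] by blast
    moreover have "a \<in> carrier R" using ideal.Icarr[OF primeideal.axioms(1)[OF prime] a(1)] .
    then have "a [^] k \<in> carrier R - g i" using primeideal.pow_notin[OF prime] a(2) by blast
    ultimately show ?thesis by blast
  qed
  moreover have "y n \<in> carrier M" using yn by (simp add: local_element_def)
  ultimately have "y n \<in> ?K n" by (auto simp: vanishing_at_def)
  moreover have "y n \<notin> ?K (Suc n)"
    using local_element_smult_nonzero[OF yn] by (auto simp: vanishing_at_def)
  ultimately show False using n by simp
qed

lemma primeideal_above_J_in_Supp: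
  assumes p: "primeideal p R" and J: "J R M \<subseteq> p"
  shows "p \<in> Supp R M"
proof -
  have "ideal m R" if "m \<in> Supp R M" for m
    using Supp_maximalideal[OF that] by (rule maximalideal.axioms(1))
  then have "\<exists>m\<in>Supp R M. m \<subseteq> p"
    using Inter_subset_primeideal[OF finite_Supp _ p] J by (simp add: J_def)
  then obtain m where "m \<in> Supp R M" "m \<subseteq> p" by blast
  then show ?thesis using maximalideal_subset_primeideal[OF Supp_maximalideal p] by metis
qed

end

theorem lemma3p6:
  fixes R :: "'a ring" and M :: "('a, 'b) module"
  assumes "cring R" and "noetherian_ring R" and "artinian_module R M"
  shows "Supp R M \<subseteq> Cos R M \<and> Cos R M \<inter> V R (J R M) = Supp R M"
proof -
  have M: "module R M" using assms(3) by (simp add: artinian_module_def)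
  interpret artinian R M by (intro artinian.intro M artinian_axioms.intro assms(3))
  have "Supp R M \<subseteq> Cos R M"
  proof
    fix p assume p: "p \<in> Supp R M"
    then obtain y where "local_element p y" using Supp_local_element by blast
    moreover have "primeideal p R" using p by (simp add: Supp_def Spec_def)
    ultimately show "p \<in> Cos R M" using local_element_Cos[OF M] by blast
  qed
  moreover have "Cos R M \<inter> V R (J R M) \<subseteq> Supp R M"
    using primeideal_above_J_in_Supp by (auto simp: V_def Spec_def)
  moreover have "Supp R M \<subseteq> V R (J R M)" by (auto simp: V_def J_def Supp_def)
  ultimately show ?thesis by blast
qed

end
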